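(* Let $N\in\mathbb{N}$, let $\omega_0$ be a centered one-dimensional Gaussian distribution, and let $h$ be the smallest integer with $N\le2^h$. Consider a complete binary tree of depth $h$ (with $2^h$ leaves, ordered left to right), and attach random variables $\alpha_v$ to its nodes as follows: the root's variable is distributed as a sum of $2^h$ independent $\omega_0$-variables; proceeding layer by layer, if $w$ has children $u$ (left) and $v$ (right) and $\alpha_w$ has been sampled with value $a$, where $\alpha_w$ is distributed as a sum of $2^l$ independent $\omega_0$-variables, then $(\alpha_u,\alpha_v)$ is sampled (using fresh independent randomness) from the conditional distribution of $(Y_1,Y_2)$ given $Y_1+Y_2=a$, where $Y_1,Y_2$ are independent and each is a sum of $2^{l-1}$ independent $\omega_0$-variables (so $\alpha_v=a-\alpha_u$). For $x\in\{0,1,\dots,N\}$ let $\alpha^x$ be the sum of the variables attached to the first $x$ leaves. Let $\omega\in\mathbb{R}^N$ have i.i.d. coordinates with distribution $\omega_0$, and let $\pi_1(x)\in\mathbb{R}^N$ be the vector whose first $x$ entries equal $1$ and whose remaining entries equal $0$. Then the joint distribution of $(\alpha^x)_{x=0,1,\dots,N}$ equals the joint distribution of $(\langle\omega,\pi_1(x)\rangle)_{x=0,1,\dots,N}$.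
   Context: All sampling is assumed exact (no simulation bias). *)

theory Defs
  imports "HOL-Probability.Probability"
begin

definition gauss :: "real \<Rightarrow> real measure" where
  "gauss \<sigma> = density lborel (normal_density 0 \<sigma>)"

definition sumlaw :: "real \<Rightarrow> nat \<Rightarrow> real measure" where
  "sumlaw \<sigma> n = distr (PiM {..<n} (\<lambda>_. gauss \<sigma>)) borel (\<lambda>x. \<Sum>i<n. x i)"

text \<open>kappa is a (regular) conditional distribution of (Y1,Y2) given Y1+Y2, where
  Y1, Y2 are independent, each a sum of 2^(l-1) independent omega_0-variables:
  kappa is a probability kernel and law(Y1+Y2,(Y1,Y2)) = law(Y1+Y2) bind kappa.\<close>
definition is_cond_kernel :: "real \<Rightarrow> nat \<Rightarrow> (real \<Rightarrow> (real \<times> real) measure) \<Rightarrow> bool" where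
  "is_cond_kernel \<sigma> l \<kappa> \<longleftrightarrow>
     \<kappa> \<in> borel \<rightarrow>\<^sub>M subprob_algebra (borel \<Otimes>\<^sub>M borel) \<and>
     (\<forall>a. prob_space (\<kappa> a)) \<and>
     distr (sumlaw \<sigma> (2^(l-1)) \<Otimes>\<^sub>M sumlaw \<sigma> (2^(l-1))) (borel \<Otimes>\<^sub>M (borel \<Otimes>\<^sub>M borel))
        (\<lambda>(y1, y2). (y1 + y2, (y1, y2)))
     = sumlaw \<sigma> (2^l) \<bind> (\<lambda>a. distr (\<kappa> a) (borel \<Otimes>\<^sub>M (borel \<Otimes>\<^sub>M borel)) (\<lambda>p. (a, p)))"

definition tree_height :: "nat \<Rightarrow> nat" where
  "tree_height N = (LEAST h. N \<le> 2 ^ h)"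

text \<open>Joint law of the variables at depth d of the tree of depth h (nodes indexed
  0..2^d-1 left to right; children of node i are 2i (left) and 2i+1 (right)).
  A node at depth d carries a sum of 2^(h-d) omega_0-variables, so its children are
  sampled (independently over the nodes of the layer) from kappa (h-d).\<close>
primrec tree_layer :: "real \<Rightarrow> (nat \<Rightarrow> real \<Rightarrow> (real \<times> real) measure) \<Rightarrow> nat \<Rightarrow> nat
    \<Rightarrow> (nat \<Rightarrow> real) measure" where
  "tree_layer \<sigma> \<kappa> h 0 =
     distr (sumlaw \<sigma> (2^h)) (PiM {..<1} (\<lambda>_. borel)) (\<lambda>a. \<lambda>i\<in>{..<1}. a)"
| "tree_layer \<sigma> \<kappa> h (Suc d) =
     tree_layer \<sigma> \<kappa> h d \<bind> (\<lambda>\<alpha>.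
       distr (PiM {..<2^d} (\<lambda>i. \<kappa> (h - d) (\<alpha> i))) (PiM {..<2^Suc d} (\<lambda>_. borel))
         (\<lambda>p. \<lambda>j\<in>{..<2^Suc d}. if even j then fst (p (j div 2)) else snd (p (j div 2))))"

end

theory Submission
  imports Defs
begin

text \<open>
  By induction on the depth d, the variables of layer d are independent, each distributed as
  a sum of 2^(h-d) independent omega_0-variables. For the induction step, sampling the children
  of all nodes with the same conditional kernel turns the product of 2^d copies of the law of
  Y1 + Y2 into the product of 2^d copies of the joint law of (Y1, Y2), because the kernel
  disintegrates that joint law over Y1 + Y2; flattening the pairs gives 2^(d+1) independent
  copies of the law of Y1. At the leaves the variables are therefore i.i.d. omega_0, and the
  partial sums over the first x leaves are exactly the inner products of the first N of them
  with the indicator vectors.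
\<close>

lemma emeasure_PiM_prob:
  assumes "finite I" "\<And>i. prob_space (M i)" "\<And>i. i \<in> I \<Longrightarrow> A i \<in> sets (M i)"
  shows "emeasure (PiM I M) (\<Pi>\<^sub>E i\<in>I. A i) = (\<Prod>i\<in>I. emeasure (M i) (A i))"
proof -
  interpret product_sigma_finite M
    by (simp add: product_sigma_finite_def assms(2) prob_space_imp_sigma_finite)
  show ?thesis using assms(1,3) by (rule emeasure_PiM)
qed

lemma measurable_PiM_kernel:
  assumes I: "finite I"
    and K: "\<And>i. K i \<in> M i \<rightarrow>\<^sub>M subprob_algebra (N i)"
    and P: "\<And>i a. prob_space (K i a)"
  shows "(\<lambda>\<alpha>. PiM I (\<lambda>i. K i (\<alpha> i))) \<in> PiM I M \<rightarrow>\<^sub>M subprob_algebra (PiM I N)"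
proof -
  have box: "(\<lambda>a. emeasure (PiM I (\<lambda>i. K i (a i))) (\<Pi>\<^sub>E i\<in>I. X i)) \<in> borel_measurable (PiM I M)"
    if X: "\<And>i. X i \<in> sets (N i)" for X
  proof (rule measurable_cong[THEN iffD1])
    show "(\<lambda>a. \<Prod>i\<in>I. emeasure (K i (a i)) (X i)) \<in> borel_measurable (PiM I M)"
      using X K by (intro borel_measurable_prod_ennreal measurable_compose[OF measurable_component_singleton]
          measurable_emeasure_kernel) auto
    fix a assume "a \<in> space (PiM I M)"
    then have "sets (K i (a i)) = sets (N i)" if "i \<in> I" for i
      using that by (intro sets_kernel[OF K]) (auto simp: space_PiM)
    then show "(\<Prod>i\<in>I. emeasure (K i (a i)) (X i)) = emeasure (PiM I (\<lambda>i. K i (a i))) (\<Pi>\<^sub>E i\<in>I. X i)"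
      using X by (intro emeasure_PiM_prob[symmetric] I P) auto
  qed
  let ?G = "{(\<Pi>\<^sub>E i\<in>I. X i) |X. (\<forall>i. X i \<in> sets (N i)) \<and> finite {i. X i \<noteq> space (N i)}}"
  show ?thesis
  proof (rule measurable_subprob_algebra_generated[OF sets_PiM_finite])
    show "Int_stable ?G"
    proof (rule Int_stableI, clarify)
      fix X Y assume X: "\<forall>i. X i \<in> sets (N i)" "finite {i. X i \<noteq> space (N i)}"
        and Y: "\<forall>i. Y i \<in> sets (N i)" "finite {i. Y i \<noteq> space (N i)}"
      have "finite {i. X i \<inter> Y i \<noteq> space (N i)}"
        by (rule finite_subset[OF _ finite_UnI[OF X(2) Y(2)]]) auto
      then show "\<exists>Z. (\<Pi>\<^sub>E i\<in>I. X i) \<inter> (\<Pi>\<^sub>E i\<in>I. Y i) = (\<Pi>\<^sub>E i\<in>I. Z i) \<and>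
          (\<forall>i. Z i \<in> sets (N i)) \<and> finite {i. Z i \<noteq> space (N i)}"
        using X Y by (intro exI[of _ "\<lambda>i. X i \<inter> Y i"]) auto
    qed
    show "?G \<subseteq> Pow (\<Pi>\<^sub>E i\<in>I. space (N i))"
      using sets.sets_into_space by fastforce
    show "(\<lambda>a. emeasure (PiM I (\<lambda>i. K i (a i))) A) \<in> borel_measurable (PiM I M)" if "A \<in> ?G" for A
      using box that by auto
    show "(\<lambda>a. emeasure (PiM I (\<lambda>i. K i (a i))) (\<Pi>\<^sub>E i\<in>I. space (N i))) \<in> borel_measurable (PiM I M)"
      using box[of "\<lambda>i. space (N i)"] by simp
    fix a assume a: "a \<in> space (PiM I M)"
    then show "subprob_space (PiM I (\<lambda>i. K i (a i)))"
      by (simp add: P prob_space_PiM prob_space_imp_subprob_space)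
    show "sets (PiM I (\<lambda>i. K i (a i))) = sets (PiM I N)"
      using a by (intro sets_PiM_cong refl sets_kernel[OF K]) (auto simp: space_PiM)
  qed
qed

lemma bind_PiM_kernel:
  assumes I: "finite I" and M: "\<And>i. prob_space (M i)"
    and K: "\<And>i. K i \<in> M i \<rightarrow>\<^sub>M subprob_algebra (N i)"
    and P: "\<And>i a. prob_space (K i a)"
  shows "PiM I M \<bind> (\<lambda>\<alpha>. PiM I (\<lambda>i. K i (\<alpha> i))) = PiM I (\<lambda>i. M i \<bind> K i)"
proof -
  have sets_bind_K: "sets (M i \<bind> K i) = sets (N i)" for i
    by (rule sets_bind[OF sets_kernel[OF K] prob_space.not_empty[OF M]])
  have prob_bind_K: "prob_space (M i \<bind> K i)" for i
    by (rule prob_space.prob_space_bind[OF M _ K]) (simp add: P)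
  interpret PK: product_sigma_finite "\<lambda>i. M i \<bind> K i"
    by (simp add: product_sigma_finite_def prob_bind_K prob_space_imp_sigma_finite)
  interpret PM: product_sigma_finite M
    by (simp add: product_sigma_finite_def M prob_space_imp_sigma_finite)
  have F: "(\<lambda>\<alpha>. PiM I (\<lambda>i. K i (\<alpha> i))) \<in> PiM I M \<rightarrow>\<^sub>M subprob_algebra (PiM I N)"
    by (rule measurable_PiM_kernel[OF I K P])
  have ne: "space (PiM I M) \<noteq> {}"
    by (rule prob_space.not_empty[OF prob_space_PiM[OF M]])
  show ?thesis
  proof (rule PK.PiM_eqI[OF I])
    show "sets (PiM I M \<bind> (\<lambda>\<alpha>. PiM I (\<lambda>i. K i (\<alpha> i)))) = sets (PiM I (\<lambda>i. M i \<bind> K i))"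
      using sets_kernel[OF F] ne by (subst sets_bind) (auto intro!: sets_PiM_cong simp: sets_bind_K)
  next
    fix A assume A: "\<And>i. i \<in> I \<Longrightarrow> A i \<in> sets (M i \<bind> K i)"
    have "emeasure (PiM I M \<bind> (\<lambda>\<alpha>. PiM I (\<lambda>i. K i (\<alpha> i)))) (\<Pi>\<^sub>E i\<in>I. A i)
        = (\<integral>\<^sup>+a. emeasure (PiM I (\<lambda>i. K i (a i))) (\<Pi>\<^sub>E i\<in>I. A i) \<partial>PiM I M)"
      using A I by (intro emeasure_bind[OF ne F]) (auto intro!: sets_PiM_I_finite simp: sets_bind_K)
    also have "\<dots> = (\<integral>\<^sup>+a. (\<Prod>i\<in>I. emeasure (K i (a i)) (A i)) \<partial>PiM I M)"
    proof (intro nn_integral_cong emeasure_PiM_prob I P)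
      fix a i assume "a \<in> space (PiM I M)" "i \<in> I"
      then show "A i \<in> sets (K i (a i))"
        using A by (subst sets_kernel[OF K]) (auto simp: space_PiM sets_bind_K)
    qed
    also have "\<dots> = (\<Prod>i\<in>I. \<integral>\<^sup>+a. emeasure (K i a) (A i) \<partial>M i)"
      using A by (intro PM.product_nn_integral_prod[OF I] measurable_emeasure_kernel[OF K])
        (auto simp: sets_bind_K)
    also have "\<dots> = (\<Prod>i\<in>I. emeasure (M i \<bind> K i) (A i))"
      using A M by (intro prod.cong refl emeasure_bind[symmetric, OF _ K])
        (auto simp: prob_space.not_empty sets_bind_K)
    finally show "emeasure (PiM I M \<bind> (\<lambda>\<alpha>. PiM I (\<lambda>i. K i (\<alpha> i)))) (\<Pi>\<^sub>E i\<in>I. A i)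
        = (\<Prod>i\<in>I. emeasure (M i \<bind> K i) (A i))" .
  qed
qed

definition interleave :: "nat \<Rightarrow> (nat \<Rightarrow> 'a \<times> 'a) \<Rightarrow> nat \<Rightarrow> 'a" where
  "interleave n p = (\<lambda>j\<in>{..<2*n}. if even j then fst (p (j div 2)) else snd (p (j div 2)))"

lemma all_lessThan_double: "(\<forall>j<2*n. P j) \<longleftrightarrow> (\<forall>i<n. P (2*i) \<and> P (2*i+1))" for n :: nat
proof
  assume halves: "\<forall>i<n. P (2*i) \<and> P (2*i+1)"
  show "\<forall>j<2*n. P j"
  proof (intro allI impI)
    fix j :: nat assume "j < 2*n"
    then have "j div 2 < n" by auto
    moreover have "j = 2*(j div 2) \<or> j = 2*(j div 2) + 1" by presburger
    ultimately show "P j" using halves by metis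
  qed
qed auto

lemma prod_lessThan_double:
  "(\<Prod>j<2*n. f j) = (\<Prod>i<n. f (2*i) * f (2*i+1))" for f :: "nat \<Rightarrow> 'a::comm_monoid_mult"
  by (induction n) (simp_all add: mult_ac)

lemma measurable_interleave:
  "interleave n \<in> PiM {..<n} (\<lambda>i. M (2*i) \<Otimes>\<^sub>M M (2*i+1)) \<rightarrow>\<^sub>M PiM {..<2*n} M"
  unfolding interleave_def
proof (rule measurable_restrict)
  fix j assume "j \<in> {..<2*n}"
  then have i: "j div 2 \<in> {..<n}" by auto
  show "(\<lambda>p. if even j then fst (p (j div 2)) else snd (p (j div 2)))
      \<in> PiM {..<n} (\<lambda>i. M (2*i) \<Otimes>\<^sub>M M (2*i+1)) \<rightarrow>\<^sub>M M j"
  proof (cases "even j")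
    case True
    have "(\<lambda>p. fst (p (j div 2))) \<in> PiM {..<n} (\<lambda>i. M (2*i) \<Otimes>\<^sub>M M (2*i+1)) \<rightarrow>\<^sub>M M (2 * (j div 2))"
      by (rule measurable_compose[OF measurable_component_singleton[OF i] measurable_fst])
    with True show ?thesis by simp
  next
    case False
    have "(\<lambda>p. snd (p (j div 2))) \<in> PiM {..<n} (\<lambda>i. M (2*i) \<Otimes>\<^sub>M M (2*i+1)) \<rightarrow>\<^sub>M M (2 * (j div 2) + 1)"
      by (rule measurable_compose[OF measurable_component_singleton[OF i] measurable_snd])
    with False show ?thesis by simp
  qed
qed

lemma interleave_even_odd [simp]:
  assumes "i < n"
  shows "interleave n p (2*i) = fst (p i)" and "interleave n p (Suc (2*i)) = snd (p i)"
  using assms by (simp_all add: interleave_def)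

lemma interleave_in_PiE_iff:
  "interleave n p \<in> (\<Pi>\<^sub>E j\<in>{..<2*n}. A j) \<longleftrightarrow> (\<forall>i<n. p i \<in> A (2*i) \<times> A (2*i+1))"
proof -
  have "interleave n p \<in> extensional {..<2*n}"
    by (simp add: interleave_def)
  then show ?thesis
    unfolding PiE_iff Ball_def lessThan_iff all_lessThan_double by (auto simp: mem_Times_iff)
qed

lemma vimage_interleave_PiE:
  assumes "\<And>j. j < 2*n \<Longrightarrow> A j \<subseteq> space (M j)"
  shows "interleave n -` (\<Pi>\<^sub>E j\<in>{..<2*n}. A j) \<inter> space (PiM {..<n} (\<lambda>i. M (2*i) \<Otimes>\<^sub>M M (2*i+1)))
    = (\<Pi>\<^sub>E i\<in>{..<n}. A (2*i) \<times> A (2*i+1))"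
proof -
  let ?P = "PiM {..<n} (\<lambda>i. M (2*i) \<Otimes>\<^sub>M M (2*i+1))"
  have "interleave n -` (\<Pi>\<^sub>E j\<in>{..<2*n}. A j) \<inter> space ?P
      = {p \<in> space ?P. \<forall>i<n. p i \<in> A (2*i) \<times> A (2*i+1)}"
    by (auto simp only: vimage_def Int_def mem_Collect_eq interleave_in_PiE_iff)
  also have "\<dots> = (\<Pi>\<^sub>E i\<in>{..<n}. A (2*i) \<times> A (2*i+1))"
    using assms by (auto simp: space_PiM space_pair_measure PiE_iff extensional_def mem_Times_iff subset_iff)
  finally show ?thesis .
qed

lemma distr_interleave_PiM:
  assumes M: "\<And>j. sigma_finite_measure (M j)"
  shows "distr (PiM {..<n} (\<lambda>i. M (2*i) \<Otimes>\<^sub>M M (2*i+1))) (PiM {..<2*n} M) (interleave n)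
    = PiM {..<2*n} M"
proof -
  let ?P = "PiM {..<n} (\<lambda>i. M (2*i) \<Otimes>\<^sub>M M (2*i+1))"
  interpret PM: product_sigma_finite M
    by (simp add: product_sigma_finite_def M)
  interpret PP: product_sigma_finite "\<lambda>i. M (2*i) \<Otimes>\<^sub>M M (2*i+1)"
    by (simp add: product_sigma_finite_def M sigma_finite_pair_measure)
  show ?thesis
  proof (rule PM.PiM_eqI)
    fix A assume A: "\<And>j. j \<in> {..<2*n} \<Longrightarrow> A j \<in> sets (M j)"
    have pairs: "A (2*i) \<times> A (2*i+1) \<in> sets (M (2*i) \<Otimes>\<^sub>M M (2*i+1))" if "i < n" for i
      using that A by auto
    have "emeasure (distr ?P (PiM {..<2*n} M) (interleave n)) (\<Pi>\<^sub>E j\<in>{..<2*n}. A j)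
        = emeasure ?P (\<Pi>\<^sub>E i\<in>{..<n}. A (2*i) \<times> A (2*i+1))"
    proof -
      have "(\<Pi>\<^sub>E j\<in>{..<2*n}. A j) \<in> sets (PiM {..<2*n} M)"
        using A by (auto intro!: sets_PiM_I_finite)
      moreover have "interleave n -` (\<Pi>\<^sub>E j\<in>{..<2*n}. A j) \<inter> space ?P
          = (\<Pi>\<^sub>E i\<in>{..<n}. A (2*i) \<times> A (2*i+1))"
        using A sets.sets_into_space by (intro vimage_interleave_PiE) auto
      ultimately show ?thesis
        by (simp only: emeasure_distr[OF measurable_interleave])
    qed
    also have "\<dots> = (\<Prod>i<n. emeasure (M (2*i) \<Otimes>\<^sub>M M (2*i+1)) (A (2*i) \<times> A (2*i+1)))"
      using pairs by (intro PP.emeasure_PiM) auto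
    also have "\<dots> = (\<Prod>i<n. emeasure (M (2*i)) (A (2*i)) * emeasure (M (2*i+1)) (A (2*i+1)))"
      using A by (intro prod.cong refl sigma_finite_measure.emeasure_pair_measure_Times M) auto
    also have "\<dots> = (\<Prod>j<2*n. emeasure (M j) (A j))"
      by (rule prod_lessThan_double[symmetric])
    finally show "emeasure (distr ?P (PiM {..<2*n} M) (interleave n)) (\<Pi>\<^sub>E j\<in>{..<2*n}. A j)
        = (\<Prod>j<2*n. emeasure (M j) (A j))" .
  qed simp_all
qed

lemma bind_eq_of_disintegration:
  assumes \<kappa>: "\<kappa> \<in> B \<rightarrow>\<^sub>M subprob_algebra N"
    and sets_M: "sets M = sets B" and ne: "space M \<noteq> {}"
    and sets_P: "sets P = sets N" and f: "f \<in> P \<rightarrow>\<^sub>M B"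
    and disint: "distr P (B \<Otimes>\<^sub>M N) (\<lambda>y. (f y, y)) = M \<bind> (\<lambda>a. distr (\<kappa> a) (B \<Otimes>\<^sub>M N) (\<lambda>p. (a, p)))"
  shows "M \<bind> \<kappa> = P"
proof -
  \<comment> \<open>Both sides of \<open>disint\<close> are pushed forward along \<open>snd\<close>.\<close>
  have \<kappa>M: "\<kappa> \<in> M \<rightarrow>\<^sub>M subprob_algebra N"
    using \<kappa> by (simp add: measurable_cong_sets[OF sets_M refl])
  have "P = distr (distr P (B \<Otimes>\<^sub>M N) (\<lambda>y. (f y, y))) N snd"
    using f by (subst distr_distr)
      (auto simp: comp_def sets_P measurable_cong_sets[OF sets_P refl] intro!: distr_id2[symmetric])
  also have "\<dots> = M \<bind> (\<lambda>a. distr (distr (\<kappa> a) (B \<Otimes>\<^sub>M N) (\<lambda>p. (a, p))) N snd)"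
  proof -
    have "(\<lambda>x. x) \<in> M \<Otimes>\<^sub>M N \<rightarrow>\<^sub>M B \<Otimes>\<^sub>M N"
      by (rule measurable_ident_sets[OF sets_pair_measure_cong[OF sets_M refl]])
    then have "(\<lambda>a. distr (\<kappa> a) (B \<Otimes>\<^sub>M N) (\<lambda>p. (a, p))) \<in> M \<rightarrow>\<^sub>M subprob_algebra (B \<Otimes>\<^sub>M N)"
      by (intro measurable_distr2[OF _ \<kappa>M]) simp
    then show ?thesis
      unfolding disint by (rule distr_bind[OF _ ne measurable_snd])
  qed
  also have "\<dots> = M \<bind> \<kappa>"
  proof (rule bind_cong[OF refl])
    fix a assume "a \<in> space M"
    then have a: "a \<in> space B"
      using sets_eq_imp_space_eq[OF sets_M] by simp
    then have sets_\<kappa>a: "sets (\<kappa> a) = sets N"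
      by (rule sets_kernel[OF \<kappa>])
    have "Pair a \<in> \<kappa> a \<rightarrow>\<^sub>M B \<Otimes>\<^sub>M N"
      unfolding measurable_cong_sets[OF sets_\<kappa>a refl] by (rule measurable_Pair1'[OF a])
    then have "distr (distr (\<kappa> a) (B \<Otimes>\<^sub>M N) (Pair a)) N snd = distr (\<kappa> a) N (snd \<circ> Pair a)"
      by (rule distr_distr[OF measurable_snd])
    also have "\<dots> = \<kappa> a"
      using distr_id2[OF sets_\<kappa>a[symmetric]] by (simp add: comp_def)
    finally show "distr (distr (\<kappa> a) (B \<Otimes>\<^sub>M N) (\<lambda>p. (a, p))) N snd = \<kappa> a" .
  qed
  finally show ?thesis ..
qed

lemma prob_space_gauss: "\<sigma> > 0 \<Longrightarrow> prob_space (gauss \<sigma>)"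
  unfolding gauss_def by (rule prob_space_normal_density)

lemma sets_gauss [simp, measurable_cong]: "sets (gauss \<sigma>) = sets borel"
  by (simp add: gauss_def)

lemma sets_sumlaw [simp, measurable_cong]: "sets (sumlaw \<sigma> n) = sets borel"
  by (simp add: sumlaw_def)

lemma space_sumlaw [simp]: "space (sumlaw \<sigma> n) = UNIV"
  by (simp add: sumlaw_def)

lemma prob_space_sumlaw: "\<sigma> > 0 \<Longrightarrow> prob_space (sumlaw \<sigma> n)"
  unfolding sumlaw_def by (intro prob_space.prob_space_distr prob_space_PiM prob_space_gauss) auto

lemma sumlaw_one:
  assumes "\<sigma> > 0"
  shows "sumlaw \<sigma> 1 = gauss \<sigma>"
proof -
  have "sumlaw \<sigma> 1 = distr (PiM {..<1::nat} (\<lambda>_. gauss \<sigma>)) (gauss \<sigma>) (\<lambda>x. x 0)"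
    unfolding sumlaw_def by (intro distr_cong) auto
  also have "\<dots> = gauss \<sigma>"
    using assms by (intro distr_PiM_component) (auto simp: prob_space_gauss)
  finally show ?thesis .
qed

lemma sumlaw_bind_cond_kernel:
  assumes "is_cond_kernel \<sigma> l \<kappa>"
  shows "sumlaw \<sigma> (2^l) \<bind> \<kappa> = sumlaw \<sigma> (2^(l-1)) \<Otimes>\<^sub>M sumlaw \<sigma> (2^(l-1))"
proof (rule bind_eq_of_disintegration)
  let ?S = "sumlaw \<sigma> (2^(l-1))"
  show "\<kappa> \<in> borel \<rightarrow>\<^sub>M subprob_algebra (borel \<Otimes>\<^sub>M borel)"
    using assms by (simp add: is_cond_kernel_def)
  show "distr (?S \<Otimes>\<^sub>M ?S) (borel \<Otimes>\<^sub>M (borel \<Otimes>\<^sub>M borel)) (\<lambda>y. (fst y + snd y, y))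
      = sumlaw \<sigma> (2^l) \<bind> (\<lambda>a. distr (\<kappa> a) (borel \<Otimes>\<^sub>M (borel \<Otimes>\<^sub>M borel)) (\<lambda>p. (a, p)))"
    using assms unfolding is_cond_kernel_def case_prod_beta by simp
qed (auto intro!: sets_pair_measure_cong)

lemma tree_layer_0:
  assumes "\<sigma> > 0"
  shows "tree_layer \<sigma> \<kappa> h 0 = PiM {..<1} (\<lambda>_. sumlaw \<sigma> (2^h))"
proof -
  interpret product_sigma_finite "\<lambda>_. sumlaw \<sigma> (2^h)"
    by (simp add: product_sigma_finite_def assms prob_space_sumlaw prob_space_imp_sigma_finite)
  have singleton: "{..<1::nat} = {0}" by auto
  have "tree_layer \<sigma> \<kappa> h 0
      = distr (sumlaw \<sigma> (2^h)) (PiM {0} (\<lambda>_. sumlaw \<sigma> (2^h))) (\<lambda>a. \<lambda>i\<in>{0}. a)"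
    unfolding tree_layer.simps singleton by (intro distr_cong refl sets_PiM_cong) simp_all
  also have "\<dots> = PiM {0} (\<lambda>_. sumlaw \<sigma> (2^h))"
    by (rule distr_component)
  finally show ?thesis
    unfolding singleton .
qed

lemma tree_layer_eq_PiM:
  assumes "\<sigma> > 0" and "\<forall>l\<in>{1..h}. is_cond_kernel \<sigma> l (\<kappa> l)" and "d \<le> h"
  shows "tree_layer \<sigma> \<kappa> h d = PiM {..<2^d} (\<lambda>_. sumlaw \<sigma> (2^(h-d)))"
  using \<open>d \<le> h\<close>
proof (induction d)
  case 0
  then show ?case using tree_layer_0[OF \<open>\<sigma> > 0\<close>] by simp
next
  case (Suc d)
  define l where "l = h - d"
  then have "is_cond_kernel \<sigma> l (\<kappa> l)" and "h - Suc d = l - 1"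
    using assms(2) Suc.prems by auto
  let ?S = "sumlaw \<sigma> (2^l)" and ?S' = "sumlaw \<sigma> (2^(l-1))"
  let ?B = "\<lambda>_::nat. borel :: real measure"
  have \<kappa>: "\<kappa> l \<in> ?S \<rightarrow>\<^sub>M subprob_algebra (borel \<Otimes>\<^sub>M borel)"
    and prob_\<kappa>: "\<And>a. prob_space (\<kappa> l a)"
    using \<open>is_cond_kernel \<sigma> l (\<kappa> l)\<close>
    by (auto simp: is_cond_kernel_def measurable_cong_sets[OF sets_sumlaw refl])
  have ne: "space (PiM {..<2^d} (\<lambda>_. ?S)) \<noteq> {}"
    by (rule prob_space.not_empty[OF prob_space_PiM[OF prob_space_sumlaw[OF \<open>\<sigma> > 0\<close>]]])
  have "tree_layer \<sigma> \<kappa> h (Suc d) = PiM {..<2^d} (\<lambda>_. ?S) \<bind>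
      (\<lambda>\<alpha>. distr (PiM {..<2^d} (\<lambda>i. \<kappa> l (\<alpha> i))) (PiM {..<2*2^d} ?B) (interleave (2^d)))"
    using Suc by (simp add: interleave_def[abs_def] l_def)
  also have "\<dots> = distr (PiM {..<2^d} (\<lambda>_. ?S) \<bind> (\<lambda>\<alpha>. PiM {..<2^d} (\<lambda>i. \<kappa> l (\<alpha> i))))
      (PiM {..<2*2^d} ?B) (interleave (2^d))"
    by (rule distr_bind[OF measurable_PiM_kernel[OF _ \<kappa> prob_\<kappa>] ne measurable_interleave, symmetric]) simp
  also have "\<dots> = distr (PiM {..<2^d} (\<lambda>_. ?S \<bind> \<kappa> l)) (PiM {..<2*2^d} ?B) (interleave (2^d))"
    by (subst bind_PiM_kernel[OF _ prob_space_sumlaw[OF \<open>\<sigma> > 0\<close>] \<kappa> prob_\<kappa>]) simp_all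
  also have "\<dots> = distr (PiM {..<2^d} (\<lambda>_. ?S' \<Otimes>\<^sub>M ?S')) (PiM {..<2*2^d} (\<lambda>_. ?S')) (interleave (2^d))"
    unfolding sumlaw_bind_cond_kernel[OF \<open>is_cond_kernel \<sigma> l (\<kappa> l)\<close>]
    by (intro distr_cong refl sets_PiM_cong) simp_all
  also have "\<dots> = PiM {..<2*2^d} (\<lambda>_. ?S')"
    using distr_interleave_PiM[of "\<lambda>_. ?S'"] \<open>\<sigma> > 0\<close>
    by (simp add: prob_space_sumlaw prob_space_imp_sigma_finite)
  finally show ?case
    using \<open>h - Suc d = l - 1\<close> by simp
qed

lemma le_two_power_tree_height: "N \<le> 2 ^ tree_height N"
  unfolding tree_height_def by (rule LeastI[of _ N]) (simp add: less_imp_le)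

lemma sum_lessThan_mult_indicator:
  fixes f :: "nat \<Rightarrow> 'a::semiring_1"
  assumes "x \<le> N"
  shows "(\<Sum>i<N. f i * (if i < x then 1 else 0)) = (\<Sum>i<x. f i)"
proof -
  have "(\<Sum>i<N. f i * (if i < x then 1 else 0)) = (\<Sum>i\<in>{..<N} \<inter> {..<x}. f i)"
    by (simp add: sum.inter_restrict if_distrib cong: if_cong)
  also have "{..<N} \<inter> {..<x} = {..<x}"
    using assms by auto
  finally show ?thesis .
qed

theorem lemmaF4:
  fixes \<sigma> :: real and N :: nat and \<kappa> :: "nat \<Rightarrow> real \<Rightarrow> (real \<times> real) measure"
  assumes "\<sigma> > 0"
    and "\<forall>l\<in>{1..tree_height N}. is_cond_kernel \<sigma> l (\<kappa> l)"
  shows "distr (tree_layer \<sigma> \<kappa> (tree_height N) (tree_height N)) (PiM {..N} (\<lambda>_. borel))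
           (\<lambda>\<alpha>. \<lambda>x\<in>{..N}. \<Sum>i<x. \<alpha> i)
       = distr (PiM {..<N} (\<lambda>_. gauss \<sigma>)) (PiM {..N} (\<lambda>_. borel))
           (\<lambda>\<omega>. \<lambda>x\<in>{..N}. \<Sum>i<N. \<omega> i * (if i < x then 1 else 0))"
proof -
  define h where "h = tree_height N"
  let ?G = "\<lambda>_::nat. gauss \<sigma>" and ?X = "PiM {..N} (\<lambda>_. borel :: real measure)"
  let ?prefix = "\<lambda>\<omega>. \<lambda>x\<in>{..N}. \<Sum>i<N. \<omega> i * (if i < x then 1 else (0::real))"
  have "N \<le> 2^h"
    unfolding h_def by (rule le_two_power_tree_height)
  interpret product_prob_space ?G "{}"
    by (simp add: product_prob_space_def product_sigma_finite_def product_prob_space_axioms_def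
        prob_space_gauss \<open>\<sigma> > 0\<close> prob_space_imp_sigma_finite)
  have leaves: "tree_layer \<sigma> \<kappa> h h = PiM {..<2^h} ?G"
    using tree_layer_eq_PiM[OF \<open>\<sigma> > 0\<close> assms(2)[folded h_def] order.refl] sumlaw_one[OF \<open>\<sigma> > 0\<close>]
    by simp
  have "distr (PiM {..<N} ?G) ?X ?prefix
      = distr (distr (PiM {..<2^h} ?G) (PiM {..<N} ?G) (\<lambda>\<omega>. restrict \<omega> {..<N})) ?X ?prefix"
    using \<open>N \<le> 2^h\<close> by (subst distr_restrict[of "{..<N}" "{..<2^h}"]) auto
  also have "\<dots> = distr (PiM {..<2^h} ?G) ?X (?prefix \<circ> (\<lambda>\<omega>. restrict \<omega> {..<N}))"
    using \<open>N \<le> 2^h\<close> by (intro distr_distr) (auto intro!: measurable_restrict_subset)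
  also have "\<dots> = distr (PiM {..<2^h} ?G) ?X (\<lambda>\<alpha>. \<lambda>x\<in>{..N}. \<Sum>i<x. \<alpha> i)"
    by (intro distr_cong) (auto simp: sum_lessThan_mult_indicator)
  finally show ?thesis
    using leaves by (simp add: h_def)
qed

end
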